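(* Let $M\in\mathbb{N}$ and let $f$ be a meromorphic function. Then $$\min_{0\le t\le M}\nu^0_{\mathcal{A}_{q^{M-t}}\mathcal{D}_q^tf}(x)=\min_{0\le t\le M}\nu^0_{\eta_q^{M-2t}f}(x)$$ for all $x\in\mathbb{C}$ with $|x|>\mathcal{R}(M,q)$.
   Context: Fix $q\in\mathbb{C}$ with $0<|q|<1$. Every $x\in\mathbb{C}$ is written uniquely as $x=\frac{z+z^{-1}}{2}$ with $|z|\ge 1$ (when $|z|=1$, $z=x+i\sqrt{1-x^2}$). $(\eta_q f)(x)=f\big(\tfrac{q^{1/2}z+q^{-1/2}z^{-1}}{2}\big)$, $(\eta_q^{-1}f)(x)=f\big(\tfrac{q^{-1/2}z+q^{1/2}z^{-1}}{2}\big)$, $\eta_q^0f=f$, $\eta_q^{\pm k}$ the $k$-fold compositions; $(\eta_{q^{\pm k}}f)(x)=f\big(\tfrac{q^{\pm k/2}z+q^{\mp k/2}z^{-1}}{2}\big)$. $\mathcal{R}(M,q)>0$ is a constant such that for $|x|>\mathcal{R}(M,q)$ one has $\eta_q^{\pm k}f=\eta_{q^{\pm k}}f$ for $0\le k\le M$ and the shifts compose additively. Askey-Wilson operator $(\mathcal{D}_qf)(x)=\frac{(\eta_qf)(x)-(\eta_q^{-1}f)(x)}{\eta_qx-\eta_q^{-1}x}$ ($x\ne\pm1$; limit at $\pm1$), $\mathcal{D}_q^0f=f$, $\mathcal{D}_q^k=\mathcal{D}_q\circ\mathcal{D}_q^{k-1}$; $(\mathcal{A}_{q^k}f)(x)=\frac{(\eta_{q^k}f)(x)+(\eta_{q^{-k}}f)(x)}{2}$,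 $\mathcal{A}_{q^0}f=f$. $\nu^0_g(x)\ge0$ denotes the order of zero of $g$ at $x$ (zero if $g(x)\ne0$). *)

theory Defs
  imports "HOL-Complex_Analysis.Complex_Analysis"
begin

definition zpar :: "complex \<Rightarrow> complex" where
  "zpar x = (THE z. x = (z + inverse z) / 2 \<and> 1 \<le> norm z \<and>
                    (norm z = 1 \<longrightarrow> z = x + \<i> * csqrt (1 - x\<^sup>2)))"

definition shiftpt :: "complex \<Rightarrow> complex \<Rightarrow> complex" where
  "shiftpt c x = (c * zpar x + inverse (c * zpar x)) / 2"

definition eta :: "complex \<Rightarrow> (complex \<Rightarrow> complex) \<Rightarrow> complex \<Rightarrow> complex" where
  "eta q f = (\<lambda>x. f (shiftpt (csqrt q) x))"

definition eta_inv :: "complex \<Rightarrow> (complex \<Rightarrow> complex) \<Rightarrow> complex \<Rightarrow> complex" where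
  "eta_inv q f = (\<lambda>x. f (shiftpt (inverse (csqrt q)) x))"

definition eta_iter :: "complex \<Rightarrow> int \<Rightarrow> (complex \<Rightarrow> complex) \<Rightarrow> complex \<Rightarrow> complex" where
  "eta_iter q k f = (if 0 \<le> k then (eta q ^^ nat k) f else (eta_inv q ^^ nat (- k)) f)"

definition eta_pow :: "complex \<Rightarrow> int \<Rightarrow> (complex \<Rightarrow> complex) \<Rightarrow> complex \<Rightarrow> complex" where
  "eta_pow q k f = (\<lambda>x. f (shiftpt (csqrt q powi k) x))"

definition AW_D :: "complex \<Rightarrow> (complex \<Rightarrow> complex) \<Rightarrow> complex \<Rightarrow> complex" where
  "AW_D q f = (\<lambda>x. let d = (\<lambda>y. (eta q f y - eta_inv q f y) / (eta q id y - eta_inv q id y))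
                  in if x = 1 \<or> x = -1 then Lim (at x) d else d x)"

definition AW_D_pow :: "complex \<Rightarrow> nat \<Rightarrow> (complex \<Rightarrow> complex) \<Rightarrow> complex \<Rightarrow> complex" where
  "AW_D_pow q k f = (AW_D q ^^ k) f"

definition AW_A :: "complex \<Rightarrow> nat \<Rightarrow> (complex \<Rightarrow> complex) \<Rightarrow> complex \<Rightarrow> complex" where
  "AW_A q k f = (if k = 0 then f
                 else (\<lambda>x. (eta_pow q (int k) f x + eta_pow q (- int k) f x) / 2))"

text \<open>Order of zero nu^0_g(x) \<ge> 0: 0 if g does not vanish at x (in particular at poles),
  infinity if g vanishes identically near x.\<close>
definition nu0 :: "(complex \<Rightarrow> complex) \<Rightarrow> complex \<Rightarrow> enat" where
  "nu0 g x = (if eventually (\<lambda>y. g y = 0) (at x) then \<infinity> else enat (nat (zorder g x)))"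

end

theory Submission
  imports Defs
begin

text \<open>Write \<open>x = (z + 1/z)/2\<close> and \<open>c = q\<^sup>1\<^sup>/\<^sup>2\<close>, and let \<open>H m t = \<eta>\<^sub>q\<^sub>^\<^sub>m \<D>\<^sub>q\<^sup>t f\<close>, i.e.\ \<open>\<D>\<^sub>q\<^sup>t f\<close>
  evaluated at \<open>(c\<^sup>m z + (c\<^sup>m z)\<^sup>-\<^sup>1)/2\<close>. The definition of \<open>\<D>\<^sub>q\<close> gives the recurrence
  \<open>d\<^sub>m \<cdot> H m (t+1) = H (m+1) t - H (m-1) t\<close>, where \<open>d\<^sub>m\<close> is analytic and nonzero near \<open>x\<close>
  once \<open>|x|\<close> is large. Hence, over the ring of germs analytic at \<open>x\<close>, each \<open>H (M-t-2j) t\<close>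
  lies in the span of the \<open>H (M-2j) 0 = \<eta>\<^sub>q\<^sup>M\<^sup>-\<^sup>2\<^sup>j f\<close>, and so does
  \<open>\<A>\<^sub>q\<^sub>^\<^sub>(\<^sub>M\<^sub>-\<^sub>t\<^sub>) \<D>\<^sub>q\<^sup>t f\<close>, the mean of \<open>H (M-t) t\<close> and \<open>H (t-M) t\<close>. Conversely, by induction on
  \<open>M - t\<close> and telescoping, every \<open>\<eta>\<^sub>q\<^sup>M\<^sup>-\<^sup>2\<^sup>j f\<close> lies in the span of the averaged derivatives.
  Two finite families spanning each other over analytic germs have the same minimal order
  of vanishing.\<close>

section \<open>Orders of zeros of analytic combinations\<close>

definition zero_order_ge :: "nat \<Rightarrow> (complex \<Rightarrow> complex) \<Rightarrow> complex \<Rightarrow> bool" where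
  "zero_order_ge n g p \<longleftrightarrow>
     g meromorphic_on {p} \<and> ((\<forall>\<^sub>F y in at p. g y = 0) \<or> int n \<le> zorder g p)"

lemma enat_le_nu0_iff:
  assumes "g meromorphic_on {p}" "n \<ge> 1"
  shows "enat n \<le> nu0 g p \<longleftrightarrow> zero_order_ge n g p"
  using assms unfolding nu0_def zero_order_ge_def by auto

lemma zero_order_ge_cong:
  assumes "zero_order_ge n g p" "\<forall>\<^sub>F y in at p. g y = h y"
  shows "zero_order_ge n h p"
proof -
  have "h meromorphic_on {p}"
    using assms unfolding zero_order_ge_def
    by (subst meromorphic_on_cong[where g=g and B="{p}"]) (auto elim: eventually_mono)
  moreover have "(\<forall>\<^sub>F y in at p. g y = 0) \<longleftrightarrow> (\<forall>\<^sub>F y in at p. h y = 0)"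
    by (rule eventually_subst) (use assms in \<open>auto elim: eventually_mono\<close>)
  moreover have "zorder g p = zorder h p" by (rule zorder_cong[OF assms(2) refl])
  ultimately show ?thesis using assms(1) unfolding zero_order_ge_def by simp
qed

lemma zero_order_ge_add:
  assumes f: "zero_order_ge n f p" and g: "zero_order_ge n g p"
  shows "zero_order_ge n (\<lambda>y. f y + g y) p"
proof (cases "\<forall>\<^sub>F y in at p. f y = 0")
  case True
  show ?thesis by (rule zero_order_ge_cong[OF g]) (use True in \<open>auto elim: eventually_mono\<close>)
next
  case f_nz: False
  show ?thesis
  proof (cases "\<forall>\<^sub>F y in at p. g y = 0")
    case True
    show ?thesis by (rule zero_order_ge_cong[OF f]) (use True in \<open>auto elim: eventually_mono\<close>)
  next
    case g_nz: False
    have mero: "(\<lambda>y. f y + g y) meromorphic_on {p}"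
      using f g unfolding zero_order_ge_def by (auto intro: meromorphic_intros)
    show ?thesis
    proof (cases "\<forall>\<^sub>F y in at p. f y + g y = 0")
      case True
      then show ?thesis using mero unfolding zero_order_ge_def by auto
    next
      case False
      have "int n \<le> zorder (\<lambda>y. f y + g y) p"
        by (rule zorder_add_ge)
           (use f g f_nz g_nz False in \<open>auto simp: zero_order_ge_def not_eventually\<close>)
      then show ?thesis using mero unfolding zero_order_ge_def by auto
    qed
  qed
qed

lemma zero_order_ge_mult_analytic:
  assumes a: "a analytic_on {p}" and g: "zero_order_ge n g p"
  shows "zero_order_ge n (\<lambda>y. a y * g y) p"
proof -
  have a_mero: "a meromorphic_on {p}" using a by (rule analytic_on_imp_meromorphic_on)
  have mero: "(\<lambda>y. a y * g y) meromorphic_on {p}"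
    using g a_mero unfolding zero_order_ge_def by (auto intro: meromorphic_intros)
  show ?thesis
  proof (cases "(\<forall>\<^sub>F y in at p. a y = 0) \<or> (\<forall>\<^sub>F y in at p. g y = 0)")
    case True
    then have "\<forall>\<^sub>F y in at p. a y * g y = 0" by (auto elim: eventually_mono)
    then show ?thesis using mero unfolding zero_order_ge_def by auto
  next
    case False
    have "zorder (\<lambda>y. a y * g y) p = zorder a p + zorder g p"
      by (rule zorder_mult) (use a_mero g False in \<open>auto simp: zero_order_ge_def not_eventually\<close>)
    moreover have "zorder a p \<ge> 0"
      by (rule zorder_ge_0) (use a False in \<open>auto simp: not_eventually\<close>)
    ultimately show ?thesis using mero g False unfolding zero_order_ge_def by auto
  qed
qed

lemma zero_order_ge_sum:
  assumes "finite I" "\<And>i. i \<in> I \<Longrightarrow> a i analytic_on {p}"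
    "\<And>i. i \<in> I \<Longrightarrow> zero_order_ge n (B i) p"
  shows "zero_order_ge n (\<lambda>y. \<Sum>i\<in>I. a i y * B i y) p"
  using assms
proof (induction I rule: finite_induct)
  case empty
  then show ?case by (simp add: zero_order_ge_def meromorphic_on_const)
next
  case (insert j I)
  have "zero_order_ge n (\<lambda>y. a j y * B j y + (\<Sum>i\<in>I. a i y * B i y)) p"
    by (intro zero_order_ge_add zero_order_ge_mult_analytic insert) auto
  then show ?case using insert by simp
qed

definition in_analytic_span ::
    "'i set \<Rightarrow> ('i \<Rightarrow> complex \<Rightarrow> complex) \<Rightarrow> complex \<Rightarrow> (complex \<Rightarrow> complex) \<Rightarrow> bool" where
  "in_analytic_span I B p h \<longleftrightarrow>
     (\<exists>a. (\<forall>i\<in>I. a i analytic_on {p}) \<and> (\<forall>\<^sub>F y in at p. h y = (\<Sum>i\<in>I. a i y * B i y)))"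

lemma in_analytic_span_base:
  assumes "finite I" "i \<in> I"
  shows "in_analytic_span I B p (B i)"
  unfolding in_analytic_span_def
proof (intro exI conjI ballI always_eventually allI)
  show "(\<lambda>_. if j = i then 1 else 0) analytic_on {p}" for j by auto
  show "B i y = (\<Sum>j\<in>I. (if j = i then 1 else 0) * B j y)" for y
  proof -
    have "(\<Sum>j\<in>I. (if j = i then 1 else 0) * B j y) = (\<Sum>j\<in>I. if j = i then B j y else 0)"
      by (rule sum.cong) auto
    then show ?thesis using assms by simp
  qed
qed

lemma in_analytic_span_zero: "in_analytic_span I B p (\<lambda>_. 0)"
  unfolding in_analytic_span_def by (intro exI[of _ "\<lambda>_ _. 0"]) auto

lemma in_analytic_span_cong:
  assumes "in_analytic_span I B p h" "\<forall>\<^sub>F y in at p. h y = h' y"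
  shows "in_analytic_span I B p h'"
proof -
  obtain a where "\<forall>i\<in>I. a i analytic_on {p}" "\<forall>\<^sub>F y in at p. h y = (\<Sum>i\<in>I. a i y * B i y)"
    using assms(1) unfolding in_analytic_span_def by blast
  moreover from this(2) assms(2) have "\<forall>\<^sub>F y in at p. h' y = (\<Sum>i\<in>I. a i y * B i y)"
    by eventually_elim simp
  ultimately show ?thesis unfolding in_analytic_span_def by blast
qed

lemma in_analytic_span_add:
  assumes "in_analytic_span I B p h1" "in_analytic_span I B p h2"
  shows "in_analytic_span I B p (\<lambda>y. h1 y + h2 y)"
proof -
  obtain a1 where a1: "\<forall>i\<in>I. a1 i analytic_on {p}"
      "\<forall>\<^sub>F y in at p. h1 y = (\<Sum>i\<in>I. a1 i y * B i y)"
    using assms(1) unfolding in_analytic_span_def by blast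
  obtain a2 where a2: "\<forall>i\<in>I. a2 i analytic_on {p}"
      "\<forall>\<^sub>F y in at p. h2 y = (\<Sum>i\<in>I. a2 i y * B i y)"
    using assms(2) unfolding in_analytic_span_def by blast
  show ?thesis unfolding in_analytic_span_def
  proof (intro exI[of _ "\<lambda>i y. a1 i y + a2 i y"] conjI ballI)
    show "(\<lambda>y. a1 i y + a2 i y) analytic_on {p}" if "i \<in> I" for i
      using a1(1) a2(1) that by (auto intro: analytic_intros)
    show "\<forall>\<^sub>F y in at p. h1 y + h2 y = (\<Sum>i\<in>I. (a1 i y + a2 i y) * B i y)"
      using a1(2) a2(2) by eventually_elim (simp add: distrib_right sum.distrib)
  qed
qed

lemma in_analytic_span_mult_analytic:
  assumes "b analytic_on {p}" "in_analytic_span I B p h"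
  shows "in_analytic_span I B p (\<lambda>y. b y * h y)"
proof -
  obtain a where a: "\<forall>i\<in>I. a i analytic_on {p}"
      "\<forall>\<^sub>F y in at p. h y = (\<Sum>i\<in>I. a i y * B i y)"
    using assms(2) unfolding in_analytic_span_def by blast
  show ?thesis unfolding in_analytic_span_def
  proof (intro exI[of _ "\<lambda>i y. b y * a i y"] conjI ballI)
    show "(\<lambda>y. b y * a i y) analytic_on {p}" if "i \<in> I" for i
      using a(1) assms(1) that by (auto intro: analytic_intros)
    show "\<forall>\<^sub>F y in at p. b y * h y = (\<Sum>i\<in>I. (b y * a i y) * B i y)"
      using a(2) by eventually_elim (simp add: sum_distrib_left mult.assoc)
  qed
qed

lemma in_analytic_span_diff:
  assumes "in_analytic_span I B p h1" "in_analytic_span I B p h2"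
  shows "in_analytic_span I B p (\<lambda>y. h1 y - h2 y)"
proof -
  have "in_analytic_span I B p (\<lambda>y. h1 y + (\<lambda>_. -1) y * h2 y)"
    by (intro in_analytic_span_add in_analytic_span_mult_analytic assms) auto
  then show ?thesis by (rule in_analytic_span_cong) auto
qed

lemma in_analytic_span_telescope:
  assumes "\<And>i. i < n \<Longrightarrow> in_analytic_span I B p (\<lambda>y. F i y - F (Suc i) y)" "k \<le> n"
  shows "in_analytic_span I B p (\<lambda>y. F 0 y - F k y)"
  using assms(2)
proof (induction k)
  case 0
  show ?case by (rule in_analytic_span_cong[OF in_analytic_span_zero]) simp
next
  case (Suc k)
  have "in_analytic_span I B p (\<lambda>y. (F 0 y - F k y) + (F k y - F (Suc k) y))"
    using Suc by (intro in_analytic_span_add assms(1)) auto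
  then show ?case by (rule in_analytic_span_cong) simp
qed

lemma in_analytic_span_meromorphic:
  assumes "in_analytic_span I B p h" "\<And>i. i \<in> I \<Longrightarrow> B i meromorphic_on {p}"
  shows "h meromorphic_on {p}"
proof -
  obtain a where a: "\<forall>i\<in>I. a i analytic_on {p}"
      "\<forall>\<^sub>F y in at p. h y = (\<Sum>i\<in>I. a i y * B i y)"
    using assms(1) unfolding in_analytic_span_def by blast
  have "(\<lambda>y. \<Sum>i\<in>I. a i y * B i y) meromorphic_on {p}"
    by (rule meromorphic_on_sum, rule meromorphic_on_mult[OF analytic_on_imp_meromorphic_on])
       (use a(1) assms(2) in auto)
  then show ?thesis
    by (subst (asm) meromorphic_on_cong[where g=h and B="{p}"])
       (use a(2) in \<open>auto elim: eventually_mono\<close>)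
qed

lemma nu0_ge_if_in_analytic_span:
  assumes I: "finite I" and span: "in_analytic_span I B p h"
    and B: "\<And>i. i \<in> I \<Longrightarrow> B i meromorphic_on {p}"
    and k: "\<And>i. i \<in> I \<Longrightarrow> k \<le> nu0 (B i) p"
  shows "k \<le> nu0 h p"
proof -
  obtain a where a: "\<forall>i\<in>I. a i analytic_on {p}"
      and h: "\<forall>\<^sub>F y in at p. h y = (\<Sum>i\<in>I. a i y * B i y)"
    using span unfolding in_analytic_span_def by blast
  show ?thesis
  proof (cases k)
    case infinity
    have "\<forall>i\<in>I. \<forall>\<^sub>F y in at p. B i y = 0"
      using k unfolding infinity nu0_def by (metis enat.distinct(2) infinity_ileE)
    then have "\<forall>\<^sub>F y in at p. \<forall>i\<in>I. B i y = 0"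
      using I by (simp add: eventually_ball_finite)
    then have "\<forall>\<^sub>F y in at p. h y = 0"
      using h by eventually_elim auto
    then show ?thesis unfolding infinity nu0_def by simp
  next
    case (enat n)
    show ?thesis
    proof (cases "n = 0")
      case True
      then show ?thesis using enat by (simp add: zero_enat_def[symmetric])
    next
      case False
      have "zero_order_ge n (\<lambda>y. \<Sum>i\<in>I. a i y * B i y) p"
        by (rule zero_order_ge_sum[OF I]) (use a k B False enat enat_le_nu0_iff in auto)
      then have "zero_order_ge n h p"
        by (rule zero_order_ge_cong) (use h in \<open>auto elim: eventually_mono\<close>)
      then show ?thesis
        using enat_le_nu0_iff[OF in_analytic_span_meromorphic[OF span B]] False enat by simp
    qed
  qed
qed

lemma Min_nu0_eq_if_spanning_each_other:
  assumes I: "finite I" "I \<noteq> {}" and J: "finite J" "J \<noteq> {}"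
    and A_mero: "\<And>i. i \<in> I \<Longrightarrow> A i meromorphic_on {p}"
    and B_mero: "\<And>j. j \<in> J \<Longrightarrow> B j meromorphic_on {p}"
    and A_span: "\<And>i. i \<in> I \<Longrightarrow> in_analytic_span J B p (A i)"
    and B_span: "\<And>j. j \<in> J \<Longrightarrow> in_analytic_span I A p (B j)"
  shows "Min ((\<lambda>i. nu0 (A i) p) ` I) = Min ((\<lambda>j. nu0 (B j) p) ` J)"
proof (rule antisym)
  have "Min ((\<lambda>j. nu0 (B j) p) ` J) \<le> nu0 (A i) p" if "i \<in> I" for i
    by (rule nu0_ge_if_in_analytic_span[OF J(1) A_span[OF that] B_mero]) (use J in auto)
  then show "Min ((\<lambda>j. nu0 (B j) p) ` J) \<le> Min ((\<lambda>i. nu0 (A i) p) ` I)"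
    using I by (intro Min.boundedI) auto
  have "Min ((\<lambda>i. nu0 (A i) p) ` I) \<le> nu0 (B j) p" if "j \<in> J" for j
    by (rule nu0_ge_if_in_analytic_span[OF I(1) B_span[OF that] A_mero]) (use I in auto)
  then show "Min ((\<lambda>i. nu0 (A i) p) ` I) \<le> Min ((\<lambda>j. nu0 (B j) p) ` J)"
    using J by (intro Min.boundedI) auto
qed

section \<open>The Joukowski map and its inverse \<open>zpar\<close>\<close>

definition jw :: "complex \<Rightarrow> complex" where
  "jw u = (u + inverse u) / 2"

lemma jw_eq_iff:
  assumes "a \<noteq> 0" "b \<noteq> 0"
  shows "jw a = jw b \<longleftrightarrow> a = b \<or> a * b = 1"
proof -
  have "jw a = jw b \<longleftrightarrow> a + inverse a = b + inverse b"
    unfolding jw_def by (metis divide_cancel_right zero_neq_numeral)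
  also have "\<dots> \<longleftrightarrow> (a + inverse a) * (a * b) = (b + inverse b) * (a * b)"
    using assms by simp
  also have "(a + inverse a) * (a * b) = a * a * b + b" using assms by (simp add: field_simps)
  also have "(b + inverse b) * (a * b) = a * b * b + a" using assms by (simp add: field_simps)
  also have "a * a * b + b = a * b * b + a \<longleftrightarrow> (a - b) * (a * b - 1) = 0"
    by (simp add: algebra_simps)
  finally show ?thesis by simp
qed

lemma norm_eq_1_if_mult_self_eq_1:
  fixes a :: complex
  assumes "a * a = 1"
  shows "norm a = 1"
proof -
  have "norm a ^ 2 = 1 ^ 2" using assms by (metis norm_mult norm_one power2_eq_square power_one)
  then show ?thesis by (simp add: abs_square_eq_1)
qed

lemma jw_inverse: "a \<noteq> 0 \<Longrightarrow> jw (inverse a) = jw a"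
  unfolding jw_def by (simp add: add.commute)

definition zpar_cond :: "complex \<Rightarrow> complex \<Rightarrow> bool" where
  "zpar_cond x z \<longleftrightarrow> x = jw z \<and> 1 \<le> norm z \<and> (norm z = 1 \<longrightarrow> z = x + \<i> * csqrt (1 - x\<^sup>2))"

lemma zpar_cond_unique:
  assumes z1: "zpar_cond x z1" and z2: "zpar_cond x z2"
  shows "z1 = z2"
proof -
  have norms: "1 \<le> norm z1" "1 \<le> norm z2" using z1 z2 unfolding zpar_cond_def by auto
  then have "jw z1 = jw z2" "z1 \<noteq> 0" "z2 \<noteq> 0" using z1 z2 unfolding zpar_cond_def by auto
  then have "z1 = z2 \<or> z1 * z2 = 1" using jw_eq_iff by blast
  then show ?thesis
  proof
    assume "z1 * z2 = 1"
    then have "norm z1 * norm z2 = 1" by (metis norm_mult norm_one)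
    moreover have "norm z1 * 1 \<le> norm z1 * norm z2" "1 * norm z2 \<le> norm z1 * norm z2"
      using norms by (intro mult_left_mono mult_right_mono; simp)+
    ultimately have "norm z1 = 1" "norm z2 = 1" using norms by linarith+
    then have "z1 = x + \<i> * csqrt (1 - x\<^sup>2)" "z2 = x + \<i> * csqrt (1 - x\<^sup>2)"
      using z1 z2 unfolding zpar_cond_def by blast+
    then show ?thesis by simp
  qed
qed

lemma zpar_cond_exists: "\<exists>z. zpar_cond x z"
proof -
  define s where "s = csqrt (1 - x\<^sup>2)"
  define v where "v = x + \<i> * s"
  have "s * s = 1 - x\<^sup>2" unfolding s_def by (metis power2_csqrt power2_eq_square)
  then have "v * (x - \<i> * s) = 1" unfolding v_def by (simp add: algebra_simps power2_eq_square)
  then have v0: "v \<noteq> 0" and "inverse v = x - \<i> * s" by (auto simp: inverse_unique)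
  then have jv: "x = jw v" unfolding jw_def v_def by simp
  show ?thesis
  proof (cases "1 \<le> norm v")
    case True
    then have "zpar_cond x v"
      unfolding zpar_cond_def by (intro conjI impI jv) (simp_all add: v_def s_def)
    then show ?thesis by blast
  next
    case False
    then have "1 < norm (inverse v)" using v0 by (simp add: norm_inverse one_less_inverse)
    moreover have "x = jw (inverse v)" using jv v0 by (simp add: jw_inverse)
    ultimately have "zpar_cond x (inverse v)" unfolding zpar_cond_def by simp
    then show ?thesis by blast
  qed
qed

lemma zpar_cond_zpar: "zpar_cond x (zpar x)"
proof -
  have "\<exists>!z. zpar_cond x z" using zpar_cond_exists zpar_cond_unique by blast
  then have "zpar_cond x (THE z. zpar_cond x z)" by (rule theI')
  then show ?thesis unfolding zpar_def zpar_cond_def jw_def .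
qed

lemma jw_zpar: "jw (zpar x) = x"
  and one_le_norm_zpar: "1 \<le> norm (zpar x)"
  using zpar_cond_zpar[of x] unfolding zpar_cond_def by auto

lemma zpar_nonzero: "zpar x \<noteq> 0"
  using one_le_norm_zpar[of x] by auto

lemma zpar_jw:
  assumes "1 < norm u"
  shows "zpar (jw u) = u"
proof -
  have "zpar_cond (jw u) u" unfolding zpar_cond_def using assms by simp
  then show ?thesis by (rule zpar_cond_unique[OF zpar_cond_zpar])
qed

lemma shiftpt_eq_jw: "shiftpt c y = jw (c * zpar y)"
  unfolding shiftpt_def jw_def ..

lemma jw_inj_on: "inj_on jw {u. 1 < norm u}"
proof (rule inj_onI)
  fix a b assume a: "a \<in> {u. 1 < norm u}" and b: "b \<in> {u. 1 < norm u}" and "jw a = jw b"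
  moreover have "a \<noteq> 0" "b \<noteq> 0" using a b by auto
  ultimately have "a = b \<or> a * b = 1" using jw_eq_iff by blast
  moreover have "1 < norm (a * b)" using a b by (simp add: norm_mult less_1_mult)
  ultimately show "a = b" by auto
qed

lemma zpar_analytic_on:
  assumes "1 < norm (zpar x)"
  shows "zpar analytic_on {x}"
proof -
  have jw_holo: "jw holomorphic_on {u. 1 < norm u}"
    unfolding jw_def by (intro holomorphic_intros) auto
  have open_dom: "open {u::complex. 1 < norm u}"
    by (intro open_Collect_less continuous_intros)
  obtain g where g: "g holomorphic_on jw ` {u. 1 < norm u}"
      "\<And>u. u \<in> {u. 1 < norm u} \<Longrightarrow> g (jw u) = u"
    using holomorphic_has_inverse[OF jw_holo open_dom jw_inj_on] by metis
  have "zpar holomorphic_on jw ` {u. 1 < norm u}"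
    by (rule holomorphic_transform[OF g(1)]) (auto simp: g(2) zpar_jw)
  moreover have "open (jw ` {u. 1 < norm u})"
    by (rule open_mapping_thm3[OF jw_holo open_dom jw_inj_on])
  ultimately have "zpar analytic_on jw ` {u. 1 < norm u}"
    by (simp add: analytic_on_open)
  moreover have "x \<in> jw ` {u. 1 < norm u}" using assms jw_zpar by (metis image_eqI mem_Collect_eq)
  ultimately show ?thesis using analytic_on_subset by blast
qed

text \<open>The denominator \<open>\<eta>\<^sub>q x - \<eta>\<^sub>q\<^sup>-\<^sup>1 x\<close> of \<open>\<D>\<^sub>q\<close> at \<open>x = jw v\<close>, with \<open>c = q\<^sup>1\<^sup>/\<^sup>2\<close>.\<close>

definition aw_denom :: "complex \<Rightarrow> complex \<Rightarrow> complex" where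
  "aw_denom c v = jw (c * v) - jw (inverse c * v)"

lemma aw_denom_nonzero:
  assumes c: "c \<noteq> 0" "norm c < 1" and v: "1 < norm v"
  shows "aw_denom c v \<noteq> 0"
proof
  assume "aw_denom c v = 0"
  moreover have "v \<noteq> 0" using v by auto
  ultimately have "c * v = inverse c * v \<or> (c * v) * (inverse c * v) = 1"
    using jw_eq_iff c unfolding aw_denom_def by auto
  moreover have "c * v \<noteq> inverse c * v"
  proof
    assume "c * v = inverse c * v"
    then have "c * c = 1" using \<open>v \<noteq> 0\<close> c by (simp add: field_simps)
    then show False using c(2) norm_eq_1_if_mult_self_eq_1 by simp
  qed
  moreover have "(c * v) * (inverse c * v) = v * v" using c by (simp add: field_simps)
  ultimately have "v * v = 1" by simp
  then show False using v norm_eq_1_if_mult_self_eq_1 by simp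
qed

section \<open>The recurrence for shifted Askey--Wilson derivatives far from the origin\<close>

locale aw_far_point =
  fixes q :: complex and M :: nat and R :: real and f :: "complex \<Rightarrow> complex" and x :: complex
  assumes q: "0 < norm q" "norm q < 1"
    and R_iter: "\<forall>g x k. R < norm x \<and> k \<le> M \<longrightarrow>
                   eta_iter q (int k) g x = eta_pow q (int k) g x \<and>
                   eta_iter q (- int k) g x = eta_pow q (- int k) g x"
    and R_add: "\<forall>g x a b. R < norm x \<and> \<bar>a\<bar> \<le> int M \<and> \<bar>b\<bar> \<le> int M \<and> \<bar>a + b\<bar> \<le> int M \<longrightarrow>
                   eta_pow q a (eta_pow q b g) x = eta_pow q (a + b) g x"
    and f_meromorphic: "f meromorphic_on UNIV"
    and M_pos: "0 < M"
    and x: "R < norm x"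
begin

definition c :: complex where
  "c = csqrt q"

lemma c_nonzero: "c \<noteq> 0" and norm_c_less_1: "norm c < 1"
  using q unfolding c_def by (auto simp: real_sqrt_lt_1_iff)

lemma eta_pow_eq_jw: "eta_pow q m g y = g (jw (c powi m * zpar y))"
  unfolding eta_pow_def shiftpt_eq_jw c_def ..

text \<open>Otherwise \<open>v = c\<^sup>M zpar y\<close> lies inside the unit disc, so \<open>zpar\<close> sends \<open>jw v\<close> to \<open>1/v\<close>,
  and shifting \<open>y\<close> by \<open>q\<^sup>M\<close> and back by \<open>q\<^sup>-\<^sup>M\<close> would not return to \<open>y\<close>, contradicting \<open>R_add\<close>.\<close>

lemma one_less_norm_zpar_far:
  assumes y: "R < norm y"
  shows "1 < norm c ^ (M - 1) * norm (zpar y)"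
proof (rule ccontr)
  assume near: "\<not> 1 < norm c ^ (M - 1) * norm (zpar y)"
  define u where "u = zpar y"
  define v where "v = c ^ M * u"
  have u0: "u \<noteq> 0" unfolding u_def by (rule zpar_nonzero)
  have v0: "v \<noteq> 0" unfolding v_def using u0 c_nonzero by simp
  have "c ^ M = c * c ^ (M - 1)" using M_pos by (simp add: power_eq_if)
  then have "norm v = norm c * (norm c ^ (M - 1) * norm (zpar y))"
    unfolding v_def u_def by (simp add: norm_mult norm_power)
  also have "\<dots> \<le> norm c * 1" using near by (intro mult_left_mono) auto
  finally have "norm v \<le> norm c" by simp
  then have norm_v: "norm v < 1" using norm_c_less_1 by simp
  then have "1 < norm (inverse v)" using v0 by (simp add: norm_inverse one_less_inverse)
  then have zpar_jw_v: "zpar (jw v) = inverse v" using v0 by (metis jw_inverse zpar_jw)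
  have "eta_pow q (int M) (eta_pow q (- int M) id) y = eta_pow q (int M + - int M) id y"
    using R_add y by auto
  then have "jw (inverse (c ^ M) * inverse v) = jw u"
    using zpar_jw_v jw_zpar[of y] unfolding eta_pow_eq_jw v_def u_def by (simp add: power_int_minus)
  then have "inverse (c ^ M) * inverse v = u \<or> inverse (c ^ M) * inverse v * u = 1"
    using jw_eq_iff c_nonzero v0 u0 by simp
  then show False
  proof
    assume "inverse (c ^ M) * inverse v = u"
    then have "v * v = 1" unfolding v_def using c_nonzero u0 by (simp add: field_simps)
    then show False using norm_v norm_eq_1_if_mult_self_eq_1 by simp
  next
    assume "inverse (c ^ M) * inverse v * u = 1"
    then have "c ^ M * c ^ M = 1" unfolding v_def using c_nonzero u0 by (simp add: field_simps)
    then have "norm (c ^ M) = 1" by (rule norm_eq_1_if_mult_self_eq_1)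
    moreover have "norm c ^ M < 1" using norm_c_less_1 M_pos by (simp add: power_less_one_iff)
    ultimately show False by (simp add: norm_power)
  qed
qed

lemma one_less_norm_shifted_zpar:
  assumes y: "R < norm y" and m: "\<bar>m\<bar> \<le> int M - 1"
  shows "1 < norm (c powi m * zpar y)"
proof -
  have far: "1 < norm c ^ (M - 1) * norm (zpar y)" by (rule one_less_norm_zpar_far[OF y])
  have nc: "0 < norm c" "norm c < 1" using c_nonzero norm_c_less_1 by auto
  then have "norm c ^ (M - 1) \<le> 1" by (simp add: power_le_one)
  then have zpar_y: "1 < norm (zpar y)"
    using far mult_right_mono[of "norm c ^ (M - 1)" 1 "norm (zpar y)"] by simp
  show ?thesis
  proof (cases "0 \<le> m")
    case True
    have "norm c ^ (M - 1) \<le> norm c ^ nat m"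
      using m True nc by (intro power_decreasing) auto
    then have "1 < norm c ^ nat m * norm (zpar y)"
      using far by (meson less_le_trans mult_right_mono norm_ge_zero)
    then show ?thesis using True by (simp add: norm_mult norm_power power_int_def)
  next
    case False
    have "1 \<le> inverse (norm c) ^ nat (- m)"
      using nc by (simp add: one_le_power one_le_inverse_iff)
    then have "1 < inverse (norm c) ^ nat (- m) * norm (zpar y)"
      using zpar_y mult_right_mono[of 1 "inverse (norm c) ^ nat (- m)" "norm (zpar y)"] by simp
    then show ?thesis
      using False by (simp add: norm_mult norm_power power_int_def norm_inverse power_inverse)
  qed
qed

lemma eventually_far: "\<forall>\<^sub>F y in at x. R < norm y"
proof -
  have "open {y::complex. R < norm y}" by (intro open_Collect_less continuous_intros)
  then show ?thesis using eventually_at_in_open'[of "{y::complex. R < norm y}" x] x by simp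
qed

definition shifted_diff :: "int \<Rightarrow> nat \<Rightarrow> complex \<Rightarrow> complex" where
  "shifted_diff m t = eta_pow q m (AW_D_pow q t f)"

definition averaged_diff :: "nat \<Rightarrow> complex \<Rightarrow> complex" where
  "averaged_diff t = AW_A q (M - t) (AW_D_pow q t f)"

definition shifted_f :: "nat \<Rightarrow> complex \<Rightarrow> complex" where
  "shifted_f j = eta_iter q (int M - 2 * int j) f"

definition denom :: "int \<Rightarrow> complex \<Rightarrow> complex" where
  "denom m y = aw_denom c (c powi m * zpar y)"

lemma denom_nonzero:
  assumes "R < norm y" "\<bar>m\<bar> \<le> int M - 1"
  shows "denom m y \<noteq> 0"
  unfolding denom_def
  by (rule aw_denom_nonzero[OF c_nonzero norm_c_less_1 one_less_norm_shifted_zpar[OF assms]])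

lemma shifted_diff_recurrence:
  assumes v: "1 < norm (c powi m * zpar y)"
  shows "denom m y * shifted_diff m (Suc t) y = shifted_diff (m + 1) t y - shifted_diff (m - 1) t y"
proof -
  define v where "v = c powi m * zpar y"
  define g where "g = AW_D_pow q t f"
  have v1: "1 < norm v" using v unfolding v_def .
  then have v0: "v \<noteq> 0" and zpar_jw_v: "zpar (jw v) = v" by (auto simp: zpar_jw)
  have "v \<noteq> 1" "v \<noteq> -1" "v * 1 \<noteq> 1" "v * -1 \<noteq> 1" using v1 by (auto simp: minus_equation_iff)
  then have "jw v \<noteq> jw 1" "jw v \<noteq> jw (-1)" using jw_eq_iff[of v 1] jw_eq_iff[of v "-1"] v0 by auto
  then have not_pm1: "\<not> (jw v = 1 \<or> jw v = -1)" unfolding jw_def by simp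
  have denom: "denom m y = aw_denom c v" unfolding denom_def v_def ..
  have "shifted_diff m (Suc t) y = AW_D q g (jw v)"
    unfolding shifted_diff_def eta_pow_eq_jw v_def g_def AW_D_pow_def by simp
  also have "\<dots> = (g (jw (c * v)) - g (jw (inverse c * v))) / denom m y"
    unfolding AW_D_def Let_def if_not_P[OF not_pm1] eta_def eta_inv_def shiftpt_eq_jw zpar_jw_v
      denom aw_denom_def c_def by simp
  finally have "shifted_diff m (Suc t) y = (g (jw (c * v)) - g (jw (inverse c * v))) / denom m y" .
  moreover have "denom m y \<noteq> 0"
    unfolding denom by (rule aw_denom_nonzero[OF c_nonzero norm_c_less_1 v1])
  moreover have "c powi (m + 1) * zpar y = c * v" "c powi (m - 1) * zpar y = inverse c * v"
    unfolding v_def using c_nonzero by (simp_all add: power_int_add power_int_diff field_simps)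
  ultimately show ?thesis unfolding shifted_diff_def eta_pow_eq_jw g_def by simp
qed

lemma eventually_shifted_diff_recurrence:
  assumes "\<bar>m\<bar> \<le> int M - 1"
  shows "\<forall>\<^sub>F y in at x. denom m y \<noteq> 0 \<and>
           denom m y * shifted_diff m (Suc t) y = shifted_diff (m + 1) t y - shifted_diff (m - 1) t y"
  using eventually_far
proof eventually_elim
  case (elim y)
  have "1 < norm (c powi m * zpar y)" by (rule one_less_norm_shifted_zpar[OF elim assms])
  with denom_nonzero[OF elim assms] show ?case by (simp add: shifted_diff_recurrence)
qed

lemma averaged_diff_eq:
  "t < M \<Longrightarrow> averaged_diff t y = (shifted_diff (int (M - t)) t y + shifted_diff (- int (M - t)) t y) / 2"
  unfolding averaged_diff_def AW_A_def shifted_diff_def by simp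

lemma averaged_diff_M: "averaged_diff M = shifted_diff 0 M"
  unfolding averaged_diff_def AW_A_def shifted_diff_def eta_pow_eq_jw by (simp add: jw_zpar)

lemma shifted_f_eq_shifted_diff:
  assumes y: "R < norm y" and j: "j \<le> M"
  shows "shifted_f j y = shifted_diff (int M - 2 * int j) 0 y"
proof (cases "2 * j \<le> M")
  case True
  then have k: "int M - 2 * int j = int (M - 2 * j)" by simp
  show ?thesis unfolding shifted_f_def shifted_diff_def k using R_iter y by (simp add: AW_D_pow_def)
next
  case False
  then have k: "int M - 2 * int j = - int (2 * j - M)" by simp
  have "eta_iter q (- int (2 * j - M)) f y = eta_pow q (- int (2 * j - M)) f y"
    using R_iter y j by auto
  then show ?thesis unfolding shifted_f_def shifted_diff_def k by (simp add: AW_D_pow_def)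
qed

lemma zpar_analytic_at_x: "zpar analytic_on {x}"
  using zpar_analytic_on one_less_norm_shifted_zpar[OF x, of 0] M_pos by simp

lemma denom_analytic: "denom m analytic_on {x}"
  unfolding denom_def[abs_def] aw_denom_def jw_def using c_nonzero zpar_nonzero
  by (intro analytic_intros zpar_analytic_at_x) auto

lemma inverse_denom_analytic:
  assumes "\<bar>m\<bar> \<le> int M - 1"
  shows "(\<lambda>y. inverse (denom m y)) analytic_on {x}"
  using denom_analytic denom_nonzero[OF x assms] by (intro analytic_intros) auto

lemma shifted_f_meromorphic:
  assumes "j \<le> M"
  shows "shifted_f j meromorphic_on {x}"
proof -
  define k where "k = int M - 2 * int j"
  have "(\<lambda>y. jw (c powi k * zpar y)) analytic_on {x}"
    unfolding jw_def using c_nonzero zpar_nonzero by (intro analytic_intros zpar_analytic_at_x) auto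
  then have "(\<lambda>y. f (jw (c powi k * zpar y))) meromorphic_on {x}"
    by (rule meromorphic_on_compose[OF f_meromorphic _ subset_UNIV])
  moreover have "\<forall>\<^sub>F y in at x. f (jw (c powi k * zpar y)) = shifted_f j y"
    using eventually_far
    by eventually_elim
       (use assms in \<open>simp add: shifted_f_eq_shifted_diff shifted_diff_def eta_pow_eq_jw AW_D_pow_def k_def\<close>)
  ultimately show ?thesis
    by (subst (asm) meromorphic_on_cong[where g="shifted_f j" and B="{x}"]) auto
qed

lemma shifted_diff_in_span_shifted_f:
  "t \<le> M \<Longrightarrow> j \<le> M - t \<Longrightarrow>
     in_analytic_span {0..M} shifted_f x (shifted_diff (int (M - t) - 2 * int j) t)"
proof (induction t arbitrary: j)
  case 0
  have "in_analytic_span {0..M} shifted_f x (shifted_f j)"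
    by (rule in_analytic_span_base) (use 0 in simp_all)
  moreover have "\<forall>\<^sub>F y in at x. shifted_f j y = shifted_diff (int (M - 0) - 2 * int j) 0 y"
    using eventually_far by eventually_elim (use 0 shifted_f_eq_shifted_diff in simp)
  ultimately show ?case by (rule in_analytic_span_cong)
next
  case (Suc t)
  define m where "m = int (M - Suc t) - 2 * int j"
  have m: "\<bar>m\<bar> \<le> int M - 1" "m + 1 = int (M - t) - 2 * int j"
    "m - 1 = int (M - t) - 2 * int (Suc j)"
    unfolding m_def using Suc.prems by auto
  have "in_analytic_span {0..M} shifted_f x
          (\<lambda>y. inverse (denom m y) * (shifted_diff (m + 1) t y - shifted_diff (m - 1) t y))"
    unfolding m(2,3) using Suc
    by (intro in_analytic_span_mult_analytic inverse_denom_analytic[OF m(1)] in_analytic_span_diff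
        Suc.IH) simp_all
  moreover have "\<forall>\<^sub>F y in at x.
      inverse (denom m y) * (shifted_diff (m + 1) t y - shifted_diff (m - 1) t y) = shifted_diff m (Suc t) y"
    using eventually_shifted_diff_recurrence[OF m(1), of t]
    by eventually_elim (metis divide_eq_eq divide_inverse_commute mult.commute)
  ultimately show ?case unfolding m_def by (rule in_analytic_span_cong)
qed

lemma averaged_diff_in_span_shifted_f:
  assumes "t \<le> M"
  shows "in_analytic_span {0..M} shifted_f x (averaged_diff t)"
proof (cases "t = M")
  case True
  have "in_analytic_span {0..M} shifted_f x (shifted_diff (int (M - M) - 2 * int 0) M)"
    by (rule shifted_diff_in_span_shifted_f) auto
  then show ?thesis unfolding True averaged_diff_M by simp
next
  case False
  then have t: "t < M" using assms by simp
  have "in_analytic_span {0..M} shifted_f x (\<lambda>y. (\<lambda>_. 1 / 2) y *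
      (shifted_diff (int (M - t) - 2 * int 0) t y + shifted_diff (int (M - t) - 2 * int (M - t)) t y))"
    using t by (intro in_analytic_span_mult_analytic in_analytic_span_add
        shifted_diff_in_span_shifted_f) auto
  then show ?thesis by (rule in_analytic_span_cong) (simp add: averaged_diff_eq[OF t])
qed

text \<open>In the induction step, with \<open>t = M - (d + 1)\<close> and \<open>F i = shifted_diff (d + 1 - 2i) t\<close>, the
  recurrence and the induction hypothesis put each \<open>F i - F (i + 1)\<close> in the span; telescoping
  gives \<open>F 0 - F i\<close>, and \<open>F 0 = averaged_diff t + (F 0 - F (d + 1))/2\<close>.\<close>

lemma shifted_diff_in_span_averaged_diff:
  "d \<le> M \<Longrightarrow> j \<le> d \<Longrightarrow>
     in_analytic_span {0..M} averaged_diff x (shifted_diff (int d - 2 * int j) (M - d))"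
proof (induction d arbitrary: j)
  case 0
  have "in_analytic_span {0..M} averaged_diff x (averaged_diff M)"
    by (rule in_analytic_span_base) simp_all
  then show ?case using 0 by (simp add: averaged_diff_M)
next
  case (Suc d)
  define t where "t = M - Suc d"
  define F where "F i = shifted_diff (int (Suc d) - 2 * int i) t" for i
  have t: "t < M" "Suc t = M - d" "int (M - t) = int (Suc d)" unfolding t_def using Suc.prems by auto
  have step: "in_analytic_span {0..M} averaged_diff x (\<lambda>y. F i y - F (Suc i) y)" if "i < Suc d" for i
  proof -
    define m where "m = int d - 2 * int i"
    have m: "\<bar>m\<bar> \<le> int M - 1" "m + 1 = int (Suc d) - 2 * int i"
      "m - 1 = int (Suc d) - 2 * int (Suc i)"
      unfolding m_def using that Suc.prems by auto
    have "in_analytic_span {0..M} averaged_diff x (\<lambda>y. denom m y * shifted_diff m (Suc t) y)"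
      unfolding m_def t(2) using that Suc.prems
      by (intro in_analytic_span_mult_analytic denom_analytic Suc.IH) simp_all
    moreover have "\<forall>\<^sub>F y in at x. denom m y * shifted_diff m (Suc t) y = F i y - F (Suc i) y"
      using eventually_shifted_diff_recurrence[OF m(1), of t]
      by eventually_elim (simp add: F_def m(2,3))
    ultimately show ?thesis by (rule in_analytic_span_cong)
  qed
  then have telescope: "in_analytic_span {0..M} averaged_diff x (\<lambda>y. F 0 y - F k y)"
    if "k \<le> Suc d" for k
    using that by (rule in_analytic_span_telescope)
  have "in_analytic_span {0..M} averaged_diff x
          (\<lambda>y. averaged_diff t y + (\<lambda>_. 1 / 2) y * (F 0 y - F (Suc d) y))"
    using t by (intro in_analytic_span_add in_analytic_span_base in_analytic_span_mult_analytic
        telescope) auto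
  then have "in_analytic_span {0..M} averaged_diff x (F 0)"
    by (rule in_analytic_span_cong) (simp add: averaged_diff_eq[OF t(1)] t(3) F_def field_simps)
  then have "in_analytic_span {0..M} averaged_diff x (\<lambda>y. F 0 y - (F 0 y - F j y))"
    using Suc.prems by (intro in_analytic_span_diff telescope) auto
  then show ?case by (rule in_analytic_span_cong) (simp add: F_def t_def)
qed

lemma Min_nu0_averaged_diff_eq_shifted_f:
  "Min ((\<lambda>t. nu0 (averaged_diff t) x) ` {0..M}) = Min ((\<lambda>j. nu0 (shifted_f j) x) ` {0..M})"
proof (rule Min_nu0_eq_if_spanning_each_other)
  show "in_analytic_span {0..M} shifted_f x (averaged_diff t)" if "t \<in> {0..M}" for t
    using that by (simp add: averaged_diff_in_span_shifted_f)
  show "in_analytic_span {0..M} averaged_diff x (shifted_f j)" if "j \<in> {0..M}" for j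
  proof -
    have "in_analytic_span {0..M} averaged_diff x (shifted_diff (int M - 2 * int j) (M - M))"
      using that by (intro shifted_diff_in_span_averaged_diff) auto
    moreover have "\<forall>\<^sub>F y in at x. shifted_diff (int M - 2 * int j) (M - M) y = shifted_f j y"
      using eventually_far by eventually_elim (use that shifted_f_eq_shifted_diff in simp)
    ultimately show ?thesis by (rule in_analytic_span_cong)
  qed
  show "shifted_f j meromorphic_on {x}" if "j \<in> {0..M}" for j
    using that by (simp add: shifted_f_meromorphic)
  then show "averaged_diff t meromorphic_on {x}" if "t \<in> {0..M}" for t
    using that by (intro in_analytic_span_meromorphic[OF averaged_diff_in_span_shifted_f]) auto
qed simp_all

end

theorem lemma5p2:
  fixes q :: complex and M :: nat and R :: real and f :: "complex \<Rightarrow> complex"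
  assumes q: "0 < norm q" "norm q < 1"
    and R_pos: "0 < R"
    and R_iter: "\<forall>g x k. R < norm x \<and> k \<le> M \<longrightarrow>
                   eta_iter q (int k) g x = eta_pow q (int k) g x \<and>
                   eta_iter q (- int k) g x = eta_pow q (- int k) g x"
    and R_add: "\<forall>g x a b. R < norm x \<and> \<bar>a\<bar> \<le> int M \<and> \<bar>b\<bar> \<le> int M \<and> \<bar>a + b\<bar> \<le> int M \<longrightarrow>
                   eta_pow q a (eta_pow q b g) x = eta_pow q (a + b) g x"
    and f: "f meromorphic_on UNIV"
    and x: "R < norm x"
  shows "Min ((\<lambda>t. nu0 (AW_A q (M - t) (AW_D_pow q t f)) x) ` {0..M})
       = Min ((\<lambda>t. nu0 (eta_iter q (int M - 2 * int t) f) x) ` {0..M})"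
proof (cases "M = 0")
  case True
  then show ?thesis by (simp add: AW_A_def AW_D_pow_def eta_iter_def)
next
  case False
  interpret aw_far_point q M R f x
    using assms False by unfold_locales auto
  show ?thesis
    using Min_nu0_averaged_diff_eq_shifted_f unfolding averaged_diff_def shifted_f_def .
qed

end
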